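(* If $[\alpha]_{K\times K}\in\mathcal A_{\mathrm{SLS}}$, then for every $S\subseteq[K]$ there exists a p-optimal cyclic partition of $S$ containing at most one trivial cycle (cycle of length $1$).
   Context: SLS regime: $\mathcal A_{\mathrm{SLS}}=\{[\alpha]\in\mathbb R_+^{K\times K}:\ \alpha_{ii}\ge\max(\alpha_{ij},\alpha_{ki},\alpha_{ik}+\alpha_{ji}-\alpha_{jk})\ \forall i,j,k\in[K],\ i\notin\{j,k\}\}$. Cycles: a cycle $\pi=(i_1\to\cdots\to i_M)$, $M\ge1$, is an ordered list of distinct indices of $[K]$, read cyclically ($i_{M+1}=i_1$); $\{\pi\}$ its set; $\Pi$ the set of all cycles; a cycle of length $1$ is called trivial; a cyclic partition of $S$ is a collection of disjoint cycles whose sets have union $S$. $\delta_{ij}=\alpha_{ii}-\alpha_{ji}$ ($i\neq j$), $\delta_{ii}=0$; $\Delta_\pi=\sum_{m=1}^M\delta_{i_mi_{m+1}}$ if $M>1$, $\Delta_\pi=\alpha_{i_1i_1}$ if $M=1$. For $S\subseteq[K]$, $\mathcal D_{\mathrm{P\text{-}TIN}}(S)=\{(d_k)_{k\in[K]}: d_k=0\ (k\notin S),\ d_k\ge0\ (k\in S),\ \sum_{k\in\{\pi\}}d_k\le\Delta_\pi\ \forall \pi\in\Pi,\ \{\pi\}\subseteq S\}$ and $\mathcal D_{\Sigma,\mathrm{P\text{-}TIN}}(S)$ is the maximum of $\sum_{k\in S}d_k$ over it. A cyclic partition $\pi_1,\dots,\pi_n$ of $S$ is p-optimal if $\mathcal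 D_{\Sigma,\mathrm{P\text{-}TIN}}(S)=\sum_{l=1}^n\Delta_{\pi_l}$. *)

theory Defs
  imports Main "HOL-Library.Extended_Real" Complex_Main
begin

text \<open>Indices are [K] = {1..K}; the matrix alpha is a function nat => nat => real,
  only its values on {1..K} x {1..K} matter.\<close>

definition SLS :: "nat \<Rightarrow> (nat \<Rightarrow> nat \<Rightarrow> real) \<Rightarrow> bool" where
  "SLS K \<alpha> \<longleftrightarrow>
     (\<forall>i\<in>{1..K}. \<forall>j\<in>{1..K}. \<alpha> i j \<ge> 0) \<and>
     (\<forall>i\<in>{1..K}. \<forall>j\<in>{1..K}. \<forall>k\<in>{1..K}. i \<noteq> j \<and> i \<noteq> k \<longrightarrow>
        \<alpha> i i \<ge> max (\<alpha> i j) (max (\<alpha> k i) (\<alpha> i k + \<alpha> j i - \<alpha> j k)))"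

text \<open>A cycle (i_1 -> ... -> i_M) is a nonempty list of distinct indices of [K], read cyclically.\<close>
definition is_cycle :: "nat \<Rightarrow> nat list \<Rightarrow> bool" where
  "is_cycle K \<pi> \<longleftrightarrow> \<pi> \<noteq> [] \<and> distinct \<pi> \<and> set \<pi> \<subseteq> {1..K}"

definition delta :: "(nat \<Rightarrow> nat \<Rightarrow> real) \<Rightarrow> nat \<Rightarrow> nat \<Rightarrow> real" where
  "delta \<alpha> i j = (if i = j then 0 else \<alpha> i i - \<alpha> j i)"

definition Delta :: "(nat \<Rightarrow> nat \<Rightarrow> real) \<Rightarrow> nat list \<Rightarrow> real" where
  "Delta \<alpha> \<pi> =
     (if length \<pi> = 1 then \<alpha> (hd \<pi>) (hd \<pi>)
      else (\<Sum>m<length \<pi>. delta \<alpha> (\<pi> ! m) (\<pi> ! ((m + 1) mod length \<pi>))))"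

definition D_PTIN :: "nat \<Rightarrow> (nat \<Rightarrow> nat \<Rightarrow> real) \<Rightarrow> nat set \<Rightarrow> (nat \<Rightarrow> real) set" where
  "D_PTIN K \<alpha> S = {d. (\<forall>k. k \<notin> S \<longrightarrow> d k = 0) \<and> (\<forall>k\<in>S. d k \<ge> 0) \<and>
      (\<forall>\<pi>. is_cycle K \<pi> \<and> set \<pi> \<subseteq> S \<longrightarrow> (\<Sum>k\<in>set \<pi>. d k) \<le> Delta \<alpha> \<pi>)}"

text \<open>The maximum of the sum-objective over D_PTIN(S) (the feasible set is a compact
  nonempty polytope under SLS, so the supremum is attained).\<close>
definition D_Sigma_PTIN :: "nat \<Rightarrow> (nat \<Rightarrow> nat \<Rightarrow> real) \<Rightarrow> nat set \<Rightarrow> real" where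
  "D_Sigma_PTIN K \<alpha> S = Sup ((\<lambda>d. \<Sum>k\<in>S. d k) ` D_PTIN K \<alpha> S)"

definition cyclic_partition :: "nat \<Rightarrow> nat set \<Rightarrow> nat list list \<Rightarrow> bool" where
  "cyclic_partition K S ps \<longleftrightarrow>
     (\<forall>\<pi>\<in>set ps. is_cycle K \<pi>) \<and> distinct (concat ps) \<and> set (concat ps) = S"

definition p_optimal :: "nat \<Rightarrow> (nat \<Rightarrow> nat \<Rightarrow> real) \<Rightarrow> nat set \<Rightarrow> nat list list \<Rightarrow> bool" where
  "p_optimal K \<alpha> S ps \<longleftrightarrow> cyclic_partition K S ps \<and>
     D_Sigma_PTIN K \<alpha> S = (\<Sum>\<pi>\<leftarrow>ps. Delta \<alpha> \<pi>)"

end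

theory Submission
  imports Defs "HOL-Combinatorics.Cycles"
begin

(*
  Let c_ii = \<alpha>_ii and c_ij = \<delta>_ij for i \<noteq> j. Then \<Delta>_\<pi> is the sum of c along the cycle \<pi>,
  and the cycle decomposition of a permutation \<sigma> of S is a cyclic partition of S of weight
  \<Sum>_x c(x, \<sigma> x). Summing the cycle constraints over a cyclic partition bounds every feasible d,
  so D_\<Sigma>(S) is at most the minimum assignment cost.

  Conversely, for a minimum-cost permutation \<sigma> rerouting along a cycle never helps, so the
  reduced costs have no negative cycles and shortest-path distances give dual potentials u, v of
  the assignment problem; d_k = u_k + v_k is feasible (its nonnegativity is where the SLS
  conditions are used) and attains the minimum. Two fixed points i, j of \<sigma> can be replaced by the
  2-cycle (i j) without increasing the cost because \<alpha>_ij, \<alpha>_ji \<ge> 0, so a minimiser with the fewest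
  fixed points has at most one trivial cycle.
*)

fun path_weight :: "('a \<Rightarrow> 'a \<Rightarrow> real) \<Rightarrow> 'a list \<Rightarrow> real" where
  "path_weight w (x # y # xs) = w x y + path_weight w (y # xs)"
| "path_weight w _ = 0"

lemma path_weight_snoc: "xs \<noteq> [] \<Longrightarrow> path_weight w (xs @ [y]) = path_weight w xs + w (last xs) y"
  by (induction w xs rule: path_weight.induct) auto

lemma path_weight_split: "path_weight w (ys @ j # zs) = path_weight w (ys @ [j]) + path_weight w (j # zs)"
  by (induction ys rule: induct_list012) auto

lemma path_weight_conv_sum: "path_weight w xs = (\<Sum>t<length xs - 1. w (xs ! t) (xs ! (t + 1)))"
proof (induction w xs rule: path_weight.induct)
  case (1 w x y xs)
  have "(\<Sum>t<length (x # y # xs) - 1. w ((x # y # xs) ! t) ((x # y # xs) ! (t + 1)))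
      = w x y + (\<Sum>t<length (y # xs) - 1. w ((y # xs) ! t) ((y # xs) ! (t + 1)))"
    by (simp add: sum.lessThan_Suc_shift del: sum.lessThan_Suc)
  then show ?case using 1 by simp
qed auto

lemma cycle_of_list_nth:
  assumes "distinct cs" "t < length cs"
  shows "cycle_of_list cs (cs ! t) = cs ! ((t + 1) mod length cs)"
proof -
  have "cycle_of_list cs (cs ! t) = map (cycle_of_list cs) cs ! t" using assms by simp
  also have "\<dots> = rotate 1 cs ! t" using cyclic_rotation[OF assms(1), of 1] by simp
  also have "\<dots> = cs ! ((t + 1) mod length cs)" using nth_rotate[OF assms(2), of 1] by simp
  finally show ?thesis .
qed

lemma sum_cycle_of_list_conv_nth:
  assumes "distinct cs"
  shows "(\<Sum>z\<in>set cs. f z (cycle_of_list cs z))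
       = (\<Sum>t<length cs. f (cs ! t) (cs ! ((t + 1) mod length cs)))"
proof -
  have "inj_on (\<lambda>t. cs ! t) {..<length cs}"
    using assms by (simp add: inj_on_def nth_eq_iff_index_eq)
  moreover have "set cs = (\<lambda>t. cs ! t) ` {..<length cs}" by (auto simp: set_conv_nth)
  ultimately show ?thesis by (simp add: sum.reindex cycle_of_list_nth[OF assms])
qed

lemma sum_cycle_of_list_conv_path_weight:
  assumes "cs \<noteq> []" "distinct cs"
  shows "(\<Sum>z\<in>set cs. f z (cycle_of_list cs z)) = path_weight f cs + f (last cs) (hd cs)"
proof -
  obtain m where m: "length cs = Suc m" using assms by (cases cs) auto
  have "(\<Sum>t<m. f (cs ! t) (cs ! ((t + 1) mod Suc m))) = (\<Sum>t<m. f (cs ! t) (cs ! (t + 1)))"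
    by (intro sum.cong) auto
  then have "(\<Sum>t<Suc m. f (cs ! t) (cs ! ((t + 1) mod Suc m)))
      = (\<Sum>t<m. f (cs ! t) (cs ! (t + 1))) + f (cs ! m) (cs ! 0)"
    by simp
  moreover have "cs ! m = last cs" "cs ! 0 = hd cs"
    using m assms by (simp_all add: last_conv_nth hd_conv_nth)
  ultimately show ?thesis
    using m by (simp add: sum_cycle_of_list_conv_nth[OF assms(2)] path_weight_conv_sum)
qed

lemma nth_cyclic_successor_neq:
  assumes "distinct cs" "length cs \<ge> 2" "t < length cs"
  shows "cs ! t \<noteq> cs ! ((t + 1) mod length cs)"
proof -
  have "(t + 1) mod length cs \<noteq> t"
  proof (cases "t + 1 < length cs")
    case False
    then have "t + 1 = length cs" using assms(3) by simp
    then show ?thesis using assms(2) by simp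
  qed simp
  moreover have "(t + 1) mod length cs < length cs"
    using assms(3) by (intro mod_less_divisor) linarith
  ultimately show ?thesis
    using nth_eq_iff_index_eq[OF assms(1,3)] by simp
qed

lemma card_fixpoints_cycle_of_list:
  assumes "distinct cs"
  shows "card {x\<in>set cs. cycle_of_list cs x = x} = (if length cs = 1 then 1 else 0)"
proof (cases "length cs \<ge> 2")
  case True
  have "cycle_of_list cs x \<noteq> x" if x: "x \<in> set cs" for x
  proof -
    obtain t where t: "t < length cs" "cs ! t = x" using x by (auto simp: in_set_conv_nth)
    then show ?thesis
      using cycle_of_list_nth[OF assms t(1)] nth_cyclic_successor_neq[OF assms True t(1)] by simp
  qed
  then have "{x\<in>set cs. cycle_of_list cs x = x} = {}" by blast
  then show ?thesis using True by simp
next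
  case False
  then consider "cs = []" | y where "cs = [y]" by (cases cs; cases "tl cs") auto
  then show ?thesis by cases auto
qed

definition simple_paths :: "'a set \<Rightarrow> 'a \<Rightarrow> 'a list set" where
  "simple_paths V j = {xs. xs \<noteq> [] \<and> distinct xs \<and> set xs \<subseteq> V \<and> last xs = j}"

text \<open>Paths may start anywhere, so this is the distance from a virtual source joined to every
  vertex by an edge of weight 0.\<close>
definition min_path_weight :: "('a \<Rightarrow> 'a \<Rightarrow> real) \<Rightarrow> 'a set \<Rightarrow> 'a \<Rightarrow> real" where
  "min_path_weight w V j = Min (path_weight w ` simple_paths V j)"

lemma finite_simple_paths: "finite V \<Longrightarrow> finite (simple_paths V j)"
  by (rule finite_subset[OF _ finite_subset_distinct]) (auto simp: simple_paths_def)

lemma min_path_weight_le: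
  "finite V \<Longrightarrow> xs \<in> simple_paths V j \<Longrightarrow> min_path_weight w V j \<le> path_weight w xs"
  unfolding min_path_weight_def by (intro Min_le finite_imageI finite_simple_paths imageI)

lemma min_path_weight_attained:
  assumes "finite V" "j \<in> V"
  obtains xs where "xs \<in> simple_paths V j" "path_weight w xs = min_path_weight w V j"
proof -
  have "[j] \<in> simple_paths V j" using assms(2) by (simp add: simple_paths_def)
  then have "path_weight w ` simple_paths V j \<noteq> {}" by blast
  then have "min_path_weight w V j \<in> path_weight w ` simple_paths V j"
    unfolding min_path_weight_def by (intro Min_in finite_imageI finite_simple_paths assms(1))
  then obtain xs where "min_path_weight w V j = path_weight w xs" "xs \<in> simple_paths V j"
    by (rule imageE)
  then show ?thesis by (intro that) simp_all
qed

lemma min_path_weight_nonpos: "finite V \<Longrightarrow> j \<in> V \<Longrightarrow> min_path_weight w V j \<le> 0"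
  using min_path_weight_le[of V "[j]" j w] by (simp add: simple_paths_def)

lemma min_path_weight_triangle:
  assumes "finite V" "x \<in> V" "j \<in> V"
    and nonneg_cycles: "\<And>cs. cs \<noteq> [] \<Longrightarrow> distinct cs \<Longrightarrow> set cs \<subseteq> V \<Longrightarrow>
      0 \<le> path_weight w cs + w (last cs) (hd cs)"
  shows "min_path_weight w V j \<le> min_path_weight w V x + w x j"
proof -
  obtain xs where xs: "xs \<in> simple_paths V x" "path_weight w xs = min_path_weight w V x"
    using min_path_weight_attained[OF assms(1,2)] .
  show ?thesis
  proof (cases "j \<in> set xs")
    case True
    \<comment> \<open>The part of the path from j to x closes a cycle with the edge from x to j.\<close>
    then obtain ys zs where xs_split: "xs = ys @ j # zs" by (meson split_list)
    have "ys @ [j] \<in> simple_paths V j" using xs(1) by (auto simp: simple_paths_def xs_split)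
    then have "min_path_weight w V j \<le> path_weight w (ys @ [j])"
      by (rule min_path_weight_le[OF assms(1)])
    moreover have "distinct (j # zs)" "set (j # zs) \<subseteq> V" "last (j # zs) = x"
      using xs(1) unfolding simple_paths_def xs_split by auto
    then have "0 \<le> path_weight w (j # zs) + w x j"
      using nonneg_cycles[of "j # zs"] by simp
    ultimately show ?thesis
      using xs(2) path_weight_split[of w ys j zs] by (simp add: xs_split)
  next
    case False
    then have "xs @ [j] \<in> simple_paths V j" using xs(1) assms(3) by (auto simp: simple_paths_def)
    then have "min_path_weight w V j \<le> path_weight w (xs @ [j])"
      by (rule min_path_weight_le[OF assms(1)])
    then show ?thesis
      using xs by (simp add: path_weight_snoc simple_paths_def)
  qed
qed

lemma min_path_weight_tight:
  assumes "finite V" "j \<in> V"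
  shows "min_path_weight w V j = 0 \<or>
    (\<exists>x\<in>V. x \<noteq> j \<and> min_path_weight w V x + w x j \<le> min_path_weight w V j)"
proof -
  obtain xs where xs: "xs \<in> simple_paths V j" "path_weight w xs = min_path_weight w V j"
    using min_path_weight_attained[OF assms] .
  define ys where "ys = butlast xs"
  have ys: "xs = ys @ [j]"
    using xs(1) append_butlast_last_id[of xs] by (simp add: simple_paths_def ys_def)
  show ?thesis
  proof (cases "ys = []")
    case True
    then show ?thesis using xs ys by simp
  next
    case False
    have "ys \<in> simple_paths V (last ys)" "last ys \<in> V" "last ys \<noteq> j"
      using xs(1) False by (auto simp: simple_paths_def ys)
    moreover from this(1) have "min_path_weight w V (last ys) \<le> path_weight w ys"
      by (rule min_path_weight_le[OF assms(1)])
    moreover have "path_weight w xs = path_weight w ys + w (last ys) j"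
      using False by (simp add: ys path_weight_snoc)
    ultimately show ?thesis
      using xs(2) by (metis add_le_cancel_right)
  qed
qed

lemma cycle_decomp_permutes: "cycle_decomp I p \<Longrightarrow> p permutes I"
proof (induction rule: cycle_decomp.induct)
  case empty
  then show ?case by (simp add: permutes_id[unfolded id_def] id_def)
next
  case (comp I p cs)
  have "p permutes set cs \<union> I" "cycle_of_list cs permutes set cs \<union> I"
    using comp.IH cycle_permutes by (auto intro: permutes_subset)
  then show ?case by (rule permutes_compose)
qed

lemma permutes_cycle_lists:
  assumes "p permutes I" "finite I"
  obtains ps where "\<forall>\<pi>\<in>set ps. \<pi> \<noteq> [] \<and> (\<forall>x\<in>set \<pi>. p x = cycle_of_list \<pi> x)"
    and "distinct (concat ps)" and "set (concat ps) = I"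
proof -
  from cycle_decomposition[OF assms] have "\<exists>ps. (\<forall>\<pi>\<in>set ps. \<pi> \<noteq> [] \<and> (\<forall>x\<in>set \<pi>. p x = cycle_of_list \<pi> x))
    \<and> distinct (concat ps) \<and> set (concat ps) = I"
  proof (induction rule: cycle_decomp.induct)
    case empty
    show ?case by (intro exI[of _ "[]"]) simp
  next
    case (comp I p cs)
    then obtain ps where ps: "\<forall>\<pi>\<in>set ps. \<pi> \<noteq> [] \<and> (\<forall>x\<in>set \<pi>. p x = cycle_of_list \<pi> x)"
      "distinct (concat ps)" "set (concat ps) = I" by blast
    have p_cs: "p x = x" if "x \<in> set cs" for x
      using that comp.hyps(3) permutes_not_in[OF cycle_decomp_permutes[OF comp.hyps(1)]] by blast
    have cs_p: "cycle_of_list cs (p x) = p x" if "x \<in> set \<pi>" "\<pi> \<in> set ps" for x \<pi>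
    proof -
      have "p x \<in> set \<pi>"
        using that ps(1) permutes_in_image[OF cycle_permutes[of \<pi>]] by auto
      then have "p x \<notin> set cs" using that comp.hyps(3) ps(3) by auto
      then show ?thesis by (simp add: id_outside_supp)
    qed
    show ?case
    proof (cases "cs = []")
      case True
      then show ?thesis using ps by auto
    next
      case False
      then show ?thesis
        using ps comp.hyps(2,3) p_cs cs_p by (intro exI[of _ "cs # ps"]) auto
    qed
  qed
  then show ?thesis using that by blast
qed

lemma sum_set_concat:
  "distinct (concat ps) \<Longrightarrow> sum f (set (concat ps)) = (\<Sum>\<pi>\<leftarrow>ps. sum f (set \<pi>))"
  by (induction ps) (auto simp: sum.union_disjoint)

lemma card_fixpoints_cycle_lists:
  assumes "\<forall>\<pi>\<in>set ps. \<forall>x\<in>set \<pi>. p x = cycle_of_list \<pi> x" "distinct (concat ps)"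
  shows "card {x\<in>set (concat ps). p x = x} = length (filter (\<lambda>\<pi>. length \<pi> = 1) ps)"
  using assms
proof (induction ps)
  case (Cons \<pi> ps)
  have "{x\<in>set (concat (\<pi> # ps)). p x = x}
      = {x\<in>set \<pi>. cycle_of_list \<pi> x = x} \<union> {x\<in>set (concat ps). p x = x}"
    using Cons.prems(1) by auto
  moreover have "card \<dots> = card {x\<in>set \<pi>. cycle_of_list \<pi> x = x} + card {x\<in>set (concat ps). p x = x}"
    using Cons.prems(2) by (intro card_Un_disjoint) auto
  ultimately show ?case
    using Cons card_fixpoints_cycle_of_list[of \<pi>] by simp
qed simp

lemma reroute_along_cycle_cost:
  fixes C :: "'a \<Rightarrow> 'a \<Rightarrow> real"
  assumes "finite S" "\<sigma> permutes S" "distinct cs" "set cs \<subseteq> S"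
  shows "(\<Sum>x\<in>S. C x ((cycle_of_list cs \<circ> \<sigma>) x)) - (\<Sum>x\<in>S. C x (\<sigma> x))
       = (\<Sum>a\<in>set cs. C (inv \<sigma> a) (cycle_of_list cs a) - C (inv \<sigma> a) a)"
proof -
  have reindex: "(\<Sum>x\<in>S. g x) = (\<Sum>a\<in>S. g (inv \<sigma> a))" for g :: "'a \<Rightarrow> real"
    using sum.permute[OF permutes_inv[OF assms(2)], of g] by (simp add: comp_def)
  have "(\<Sum>x\<in>S. C x ((cycle_of_list cs \<circ> \<sigma>) x)) - (\<Sum>x\<in>S. C x (\<sigma> x))
      = (\<Sum>a\<in>S. C (inv \<sigma> a) (cycle_of_list cs a) - C (inv \<sigma> a) a)"
    by (subst (1 2) reindex) (simp add: permutes_inverses(1)[OF assms(2)] sum_subtractf)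
  also have "\<dots> = (\<Sum>a\<in>set cs. C (inv \<sigma> a) (cycle_of_list cs a) - C (inv \<sigma> a) a)"
    using assms(1,4) by (intro sum.mono_neutral_right) (auto simp: id_outside_supp)
  finally show ?thesis .
qed

definition min_cost_permutation :: "('a \<Rightarrow> 'a \<Rightarrow> real) \<Rightarrow> 'a set \<Rightarrow> ('a \<Rightarrow> 'a) \<Rightarrow> bool" where
  "min_cost_permutation C S \<sigma> \<longleftrightarrow> \<sigma> permutes S \<and>
     (\<forall>\<tau>. \<tau> permutes S \<longrightarrow> (\<Sum>x\<in>S. C x (\<sigma> x)) \<le> (\<Sum>x\<in>S. C x (\<tau> x)))"

lemma optimal_assignment_potentials:
  fixes C :: "'a \<Rightarrow> 'a \<Rightarrow> real"
  assumes "finite S" "min_cost_permutation C S \<sigma>"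
  obtains u v where "\<And>i j. i \<in> S \<Longrightarrow> j \<in> S \<Longrightarrow> u i + v j \<le> C i j"
    and "\<And>i. i \<in> S \<Longrightarrow> u i + v (\<sigma> i) = C i (\<sigma> i)"
    and "\<And>j. j \<in> S \<Longrightarrow> v j \<le> 0"
    and "\<And>j. j \<in> S \<Longrightarrow> v j = 0 \<or> (\<exists>i\<in>S. \<sigma> i \<noteq> j \<and> u i + v j = C i j)"
proof -
  have \<sigma>: "\<sigma> permutes S"
    and opt: "\<And>\<tau>. \<tau> permutes S \<Longrightarrow> (\<Sum>x\<in>S. C x (\<sigma> x)) \<le> (\<Sum>x\<in>S. C x (\<tau> x))"
    using assms(2) by (auto simp: min_cost_permutation_def)
  \<comment> \<open>Reduced cost of reassigning the row mapped to a onto j; summed along a cycle it is the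
    cost change of rerouting \<sigma> along that cycle.\<close>
  define w where "w a j = C (inv \<sigma> a) j - C (inv \<sigma> a) a" for a j
  define v where "v = min_path_weight w S"
  define u where "u i = C i (\<sigma> i) - v (\<sigma> i)" for i
  have \<sigma>_in: "\<sigma> i \<in> S" if "i \<in> S" for i
    using that \<sigma> by (simp add: permutes_in_image)
  have inv_\<sigma>: "inv \<sigma> (\<sigma> i) = i" for i
    using permutes_inverses(2)[OF \<sigma>] .
  have nonneg_cycles: "0 \<le> path_weight w cs + w (last cs) (hd cs)"
    if "cs \<noteq> []" "distinct cs" "set cs \<subseteq> S" for cs
  proof -
    have "cycle_of_list cs \<circ> \<sigma> permutes S"
      using permutes_compose[OF \<sigma>] cycle_permutes permutes_subset that(3) by blast
    then show ?thesis
      using opt reroute_along_cycle_cost[OF assms(1) \<sigma> that(2,3), of C]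
        sum_cycle_of_list_conv_path_weight[OF that(1,2), of w]
      by (fastforce simp: w_def)
  qed
  have dual_feasible: "u i + v j \<le> C i j" if "i \<in> S" "j \<in> S" for i j
    using min_path_weight_triangle[OF assms(1) \<sigma>_in[OF that(1)] that(2) nonneg_cycles]
    by (simp add: u_def v_def w_def inv_\<sigma>)
  show ?thesis
  proof
    show "u i + v j \<le> C i j" if "i \<in> S" "j \<in> S" for i j
      using dual_feasible[OF that] .
    show "u i + v (\<sigma> i) = C i (\<sigma> i)" for i
      by (simp add: u_def)
    show "v j \<le> 0" if "j \<in> S" for j
      using min_path_weight_nonpos[OF assms(1) that] by (simp add: v_def)
    show "v j = 0 \<or> (\<exists>i\<in>S. \<sigma> i \<noteq> j \<and> u i + v j = C i j)" if j: "j \<in> S" for j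
    proof -
      have "v j = 0 \<or> (\<exists>i\<in>S. \<sigma> i \<noteq> j \<and> C i j \<le> u i + v j)"
        using min_path_weight_tight[OF assms(1) j, of w] permutes_inverses(1)[OF \<sigma>]
          permutes_in_image[OF permutes_inv[OF \<sigma>]]
        by (fastforce simp: u_def v_def w_def)
      then show ?thesis
        using dual_feasible j by fastforce
    qed
  qed
qed

lemma transpose_comp_fixpoints:
  fixes C :: "'a \<Rightarrow> 'a \<Rightarrow> real"
  assumes "finite S" "\<sigma> permutes S" "i \<in> S" "j \<in> S" "i \<noteq> j" "\<sigma> i = i" "\<sigma> j = j"
  defines "\<tau> \<equiv> Transposition.transpose i j \<circ> \<sigma>"
  shows "\<tau> permutes S"
    and "(\<Sum>x\<in>S. C x (\<tau> x)) = (\<Sum>x\<in>S. C x (\<sigma> x)) + (C i j + C j i - C i i - C j j)"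
    and "{x\<in>S. \<tau> x = x} = {x\<in>S. \<sigma> x = x} - {i, j}"
proof -
  show "\<tau> permutes S"
    unfolding \<tau>_def using permutes_compose[OF assms(2) permutes_swap_id[OF assms(3,4)]] .
  have outside: "\<tau> x = \<sigma> x" "\<sigma> x \<noteq> i" "\<sigma> x \<noteq> j" if "x \<noteq> i" "x \<noteq> j" for x
    using that assms(6,7) permutes_inj[OF assms(2)] by (auto simp: \<tau>_def inj_eq transpose_def)
  have "(\<Sum>x\<in>S. C x (\<tau> x)) - (\<Sum>x\<in>S. C x (\<sigma> x)) = (\<Sum>x\<in>S. C x (\<tau> x) - C x (\<sigma> x))"
    by (simp add: sum_subtractf)
  also have "\<dots> = (\<Sum>x\<in>{i, j}. C x (\<tau> x) - C x (\<sigma> x))"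
    using assms(1,3,4) outside by (intro sum.mono_neutral_right) auto
  also have "\<dots> = C i j + C j i - C i i - C j j"
    using assms(5-7) by (simp add: \<tau>_def)
  finally show "(\<Sum>x\<in>S. C x (\<tau> x)) = (\<Sum>x\<in>S. C x (\<sigma> x)) + (C i j + C j i - C i i - C j j)"
    by simp
  have "\<tau> x = x \<longleftrightarrow> \<sigma> x = x \<and> x \<notin> {i, j}" for x
    using outside(1)[of x] assms(5-7) by (cases "x = i \<or> x = j") (auto simp: \<tau>_def)
  then show "{x\<in>S. \<tau> x = x} = {x\<in>S. \<sigma> x = x} - {i, j}"
    by auto
qed

lemma optimal_permutation_with_few_fixpoints:
  fixes C :: "'a \<Rightarrow> 'a \<Rightarrow> real"
  assumes "finite S"
    and swap: "\<And>i j. i \<in> S \<Longrightarrow> j \<in> S \<Longrightarrow> i \<noteq> j \<Longrightarrow> C i j + C j i \<le> C i i + C j j"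
  obtains \<sigma> where "min_cost_permutation C S \<sigma>" and "card {x\<in>S. \<sigma> x = x} \<le> 1"
proof -
  define cost where "cost \<sigma> = (\<Sum>x\<in>S. C x (\<sigma> x))" for \<sigma>
  have fin_perms: "finite {\<sigma>. \<sigma> permutes S}"
    using finite_permutations[OF assms(1)] .
  obtain \<sigma>\<^sub>0 where "is_arg_min cost (\<lambda>\<sigma>. \<sigma> \<in> {\<sigma>. \<sigma> permutes S}) \<sigma>\<^sub>0"
    using ex_is_arg_min_if_finite[OF fin_perms, of cost] permutes_id by blast
  then have "min_cost_permutation C S \<sigma>\<^sub>0"
    by (auto simp: min_cost_permutation_def is_arg_min_linorder cost_def)
  moreover have "finite (Collect (min_cost_permutation C S))"
    using fin_perms by (rule finite_subset[rotated]) (auto simp: min_cost_permutation_def)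
  ultimately obtain \<sigma>
    where \<sigma>: "is_arg_min (\<lambda>\<sigma>. card {x\<in>S. \<sigma> x = x}) (min_cost_permutation C S) \<sigma>"
    using ex_is_arg_min_if_finite[of "Collect (min_cost_permutation C S)"] by auto
  then have \<sigma>_opt: "min_cost_permutation C S \<sigma>" by (simp add: is_arg_min_linorder)
  have "card {x\<in>S. \<sigma> x = x} \<le> 1"
  proof (rule ccontr)
    assume "\<not> card {x\<in>S. \<sigma> x = x} \<le> 1"
    then obtain i j where ij: "i \<in> S" "j \<in> S" "i \<noteq> j" "\<sigma> i = i" "\<sigma> j = j"
      using card_le_Suc0_iff_eq[of "{x\<in>S. \<sigma> x = x}"] assms(1) by auto
    define \<tau> where "\<tau> = Transposition.transpose i j \<circ> \<sigma>"
    have \<sigma>_perm: "\<sigma> permutes S" using \<sigma>_opt by (simp add: min_cost_permutation_def)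
    note swapped = transpose_comp_fixpoints[OF assms(1) \<sigma>_perm ij, folded \<tau>_def]
    have "cost \<tau> \<le> cost \<sigma>"
      using swapped(2)[of C] swap[OF ij(1-3)] by (simp add: cost_def)
    then have "min_cost_permutation C S \<tau>"
      using \<sigma>_opt swapped(1) by (fastforce simp: min_cost_permutation_def cost_def)
    moreover have "card {x\<in>S. \<tau> x = x} < card {x\<in>S. \<sigma> x = x}"
      unfolding swapped(3) using assms(1) ij by (intro psubset_card_mono) auto
    ultimately show False using \<sigma> by (auto simp: is_arg_min_linorder)
  qed
  then show ?thesis using \<sigma>_opt that by blast
qed

definition step_cost :: "(nat \<Rightarrow> nat \<Rightarrow> real) \<Rightarrow> nat \<Rightarrow> nat \<Rightarrow> real" where
  "step_cost \<alpha> i j = (if i = j then \<alpha> i i else delta \<alpha> i j)"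

lemma Delta_eq_sum_step_cost:
  assumes "distinct \<pi>" "\<pi> \<noteq> []"
  shows "Delta \<alpha> \<pi> = (\<Sum>i\<in>set \<pi>. step_cost \<alpha> i (cycle_of_list \<pi> i))"
proof (cases "length \<pi> = 1")
  case True
  then obtain x where "\<pi> = [x]" by (cases \<pi>) auto
  then show ?thesis by (simp add: Delta_def step_cost_def)
next
  case False
  moreover have "length \<pi> \<noteq> 0" using assms(2) by simp
  ultimately have "length \<pi> \<ge> 2" by linarith
  then have "delta \<alpha> (\<pi> ! t) (\<pi> ! ((t + 1) mod length \<pi>))
      = step_cost \<alpha> (\<pi> ! t) (\<pi> ! ((t + 1) mod length \<pi>))" if "t < length \<pi>" for t
    using nth_cyclic_successor_neq[OF assms(1) _ that] by (simp add: step_cost_def)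
  then show ?thesis
    using False by (simp add: Delta_def sum_cycle_of_list_conv_nth[OF assms(1)])
qed

lemma SLS_nonneg: "SLS K \<alpha> \<Longrightarrow> i \<in> {1..K} \<Longrightarrow> j \<in> {1..K} \<Longrightarrow> 0 \<le> \<alpha> i j"
  by (auto simp: SLS_def)

lemma SLS_le_diagonal:
  "SLS K \<alpha> \<Longrightarrow> i \<in> {1..K} \<Longrightarrow> k \<in> {1..K} \<Longrightarrow> i \<noteq> k \<Longrightarrow> \<alpha> k i \<le> \<alpha> i i"
  unfolding SLS_def by (metis max.boundedE)

lemma SLS_triangle:
  "SLS K \<alpha> \<Longrightarrow> i \<in> {1..K} \<Longrightarrow> j \<in> {1..K} \<Longrightarrow> k \<in> {1..K} \<Longrightarrow> i \<noteq> j \<Longrightarrow> i \<noteq> k \<Longrightarrow>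
    \<alpha> i k + \<alpha> j i - \<alpha> j k \<le> \<alpha> i i"
  unfolding SLS_def by (metis max.boundedE)

lemma SLS_step_cost_swap:
  assumes "SLS K \<alpha>" "S \<subseteq> {1..K}" "i \<in> S" "j \<in> S" "i \<noteq> j"
  shows "step_cost \<alpha> i j + step_cost \<alpha> j i \<le> step_cost \<alpha> i i + step_cost \<alpha> j j"
proof -
  have "i \<in> {1..K}" "j \<in> {1..K}" using assms(2-4) by auto
  then have "0 \<le> \<alpha> i j" "0 \<le> \<alpha> j i" using SLS_nonneg[OF assms(1)] by blast+
  then show ?thesis
    using assms(5) by (simp add: step_cost_def delta_def)
qed

lemma SLS_diagonal_potential_nonneg:
  assumes "SLS K \<alpha>" "S \<subseteq> {1..K}" "\<sigma> permutes S"
    and feasible: "\<And>i j. i \<in> S \<Longrightarrow> j \<in> S \<Longrightarrow> u i + v j \<le> step_cost \<alpha> i j"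
    and tight: "\<And>i. i \<in> S \<Longrightarrow> u i + v (\<sigma> i) = step_cost \<alpha> i (\<sigma> i)"
    and nonpos: "\<And>j. j \<in> S \<Longrightarrow> v j \<le> 0"
    and column_tight: "\<And>j. j \<in> S \<Longrightarrow> v j = 0 \<or> (\<exists>i\<in>S. \<sigma> i \<noteq> j \<and> u i + v j = step_cost \<alpha> i j)"
    and i: "i \<in> S"
  shows "0 \<le> u i + v i"
proof (cases "\<sigma> i = i")
  case True
  then show ?thesis
    using tight[OF i] SLS_nonneg[OF assms(1)] assms(2) i by (auto simp: step_cost_def)
next
  case False
  define a where "a = \<sigma> i"
  have a: "a \<in> S" "a \<noteq> i" using False assms(3) i by (auto simp: a_def permutes_in_image)
  have K: "i \<in> {1..K}" "a \<in> {1..K}" using assms(2) i a(1) by auto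
  have "v i = 0 \<or> (\<exists>g\<in>S. g \<noteq> a \<and> u g + v i = step_cost \<alpha> g i)"
  proof (cases "\<sigma> a = i")
    case True
    then show ?thesis using column_tight[OF i] by auto
  next
    case False
    have "inv \<sigma> i \<in> S" "\<sigma> (inv \<sigma> i) = i"
      using assms(3) i by (simp_all add: permutes_in_image permutes_inv permutes_inverses(1))
    then show ?thesis using tight[of "inv \<sigma> i"] False by metis
  qed
  then consider (zero) "v i = 0" | (row) g where "g \<in> S" "g \<noteq> a" "u g + v i = step_cost \<alpha> g i"
    by blast
  then have "v a - v i \<le> \<alpha> i i - \<alpha> a i"
  proof cases
    case zero
    then show ?thesis using nonpos[OF a(1)] SLS_le_diagonal[OF assms(1) K] a(2) by simp
  next
    case row
    show ?thesis
    proof (cases "g = i")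
      case True
      then show ?thesis
        using row(3) tight[OF i] SLS_nonneg[OF assms(1) K(1) K(1)] a(2)
        by (simp add: a_def step_cost_def delta_def)
    next
      case False
      \<comment> \<open>Comparing row g at the columns a and i is where the SLS condition enters.\<close>
      have "g \<in> {1..K}" using assms(2) row(1) by auto
      then have "\<alpha> i g + \<alpha> a i - \<alpha> a g \<le> \<alpha> i i"
        using SLS_triangle[OF assms(1) K] a(2) False by auto
      then show ?thesis
        using feasible[OF row(1) a(1)] row(2,3) False by (simp add: step_cost_def delta_def)
    qed
  qed
  moreover have "u i + v a = \<alpha> i i - \<alpha> a i"
    using tight[OF i] a(2) by (simp add: a_def step_cost_def delta_def)
  ultimately show ?thesis by linarith
qed

lemma diagonal_potential_in_D_PTIN:
  assumes feasible: "\<And>i j. i \<in> S \<Longrightarrow> j \<in> S \<Longrightarrow> u i + v j \<le> step_cost \<alpha> i j"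
    and nonneg: "\<And>i. i \<in> S \<Longrightarrow> 0 \<le> u i + v i"
  shows "(\<lambda>k. if k \<in> S then u k + v k else 0) \<in> D_PTIN K \<alpha> S"
  unfolding D_PTIN_def
proof (intro CollectI conjI allI ballI impI)
  fix \<pi> assume \<pi>: "is_cycle K \<pi> \<and> set \<pi> \<subseteq> S"
  let ?c = "cycle_of_list \<pi>"
  have \<pi>_cycle: "distinct \<pi>" "\<pi> \<noteq> []" using \<pi> by (auto simp: is_cycle_def)
  have c_in: "?c k \<in> set \<pi>" if "k \<in> set \<pi>" for k
    using that by (simp add: permutes_in_image[OF cycle_permutes])
  have "(\<Sum>k\<in>set \<pi>. if k \<in> S then u k + v k else 0) = (\<Sum>k\<in>set \<pi>. u k + v k)"
    using \<pi> by (intro sum.cong) auto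
  also have "\<dots> = (\<Sum>k\<in>set \<pi>. u k) + (\<Sum>k\<in>set \<pi>. v k)"
    by (rule sum.distrib)
  also have "(\<Sum>k\<in>set \<pi>. v k) = (\<Sum>k\<in>set \<pi>. v (?c k))"
    using sum.permute[OF cycle_permutes[of \<pi>], of v] by (simp add: comp_def)
  also have "(\<Sum>k\<in>set \<pi>. u k) + \<dots> \<le> (\<Sum>k\<in>set \<pi>. step_cost \<alpha> k (?c k))"
    unfolding sum.distrib[symmetric] using \<pi> c_in by (intro sum_mono feasible) auto
  also have "\<dots> = Delta \<alpha> \<pi>"
    using Delta_eq_sum_step_cost[OF \<pi>_cycle] by simp
  finally show "(\<Sum>k\<in>set \<pi>. if k \<in> S then u k + v k else 0) \<le> Delta \<alpha> \<pi>" .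
qed (auto intro: nonneg)

lemma D_PTIN_attains_min_cost_permutation:
  assumes "SLS K \<alpha>" "S \<subseteq> {1..K}" "min_cost_permutation (step_cost \<alpha>) S \<sigma>"
  obtains d where "d \<in> D_PTIN K \<alpha> S" and "(\<Sum>k\<in>S. d k) = (\<Sum>x\<in>S. step_cost \<alpha> x (\<sigma> x))"
proof -
  have "finite S" using assms(2) finite_subset by blast
  have \<sigma>: "\<sigma> permutes S" using assms(3) by (simp add: min_cost_permutation_def)
  obtain u v where potentials:
    "\<And>i j. i \<in> S \<Longrightarrow> j \<in> S \<Longrightarrow> u i + v j \<le> step_cost \<alpha> i j"
    "\<And>i. i \<in> S \<Longrightarrow> u i + v (\<sigma> i) = step_cost \<alpha> i (\<sigma> i)"
    "\<And>j. j \<in> S \<Longrightarrow> v j \<le> 0"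
    "\<And>j. j \<in> S \<Longrightarrow> v j = 0 \<or> (\<exists>i\<in>S. \<sigma> i \<noteq> j \<and> u i + v j = step_cost \<alpha> i j)"
    using optimal_assignment_potentials[OF \<open>finite S\<close> assms(3)] by metis
  define d where "d k = (if k \<in> S then u k + v k else 0)" for k
  have "d \<in> D_PTIN K \<alpha> S"
    unfolding d_def using potentials(1) SLS_diagonal_potential_nonneg[OF assms(1,2) \<sigma> potentials]
    by (rule diagonal_potential_in_D_PTIN)
  moreover have "(\<Sum>k\<in>S. d k) = (\<Sum>k\<in>S. u k + v (\<sigma> k))"
    using sum.permute[OF \<sigma>, of v] by (simp add: d_def sum.distrib comp_def)
  moreover have "\<dots> = (\<Sum>x\<in>S. step_cost \<alpha> x (\<sigma> x))"
    using potentials(2) by simp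
  ultimately show ?thesis using that by simp
qed

lemma sum_le_Delta_of_cyclic_partition:
  assumes "d \<in> D_PTIN K \<alpha> S" "cyclic_partition K S ps"
  shows "(\<Sum>k\<in>S. d k) \<le> (\<Sum>\<pi>\<leftarrow>ps. Delta \<alpha> \<pi>)"
proof -
  have ps: "distinct (concat ps)" "set (concat ps) = S" "\<forall>\<pi>\<in>set ps. is_cycle K \<pi>"
    using assms(2) by (auto simp: cyclic_partition_def)
  then have "(\<Sum>k\<in>S. d k) = (\<Sum>\<pi>\<leftarrow>ps. \<Sum>k\<in>set \<pi>. d k)"
    using sum_set_concat by metis
  also have "\<dots> \<le> (\<Sum>\<pi>\<leftarrow>ps. Delta \<alpha> \<pi>)"
    using assms(1) ps by (intro sum_list_mono) (auto simp: D_PTIN_def)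
  finally show ?thesis .
qed

lemma p_optimalI:
  assumes "cyclic_partition K S ps" "d \<in> D_PTIN K \<alpha> S" "(\<Sum>k\<in>S. d k) = (\<Sum>\<pi>\<leftarrow>ps. Delta \<alpha> \<pi>)"
  shows "p_optimal K \<alpha> S ps"
proof -
  have "D_Sigma_PTIN K \<alpha> S = (\<Sum>\<pi>\<leftarrow>ps. Delta \<alpha> \<pi>)"
    unfolding D_Sigma_PTIN_def
    using assms sum_le_Delta_of_cyclic_partition[OF _ assms(1)]
    by (intro cSup_eq_maximum) force+
  then show ?thesis using assms(1) by (simp add: p_optimal_def)
qed

lemma cyclic_partition_of_permutation:
  assumes "S \<subseteq> {1..K}" "\<sigma> permutes S"
  obtains ps where "cyclic_partition K S ps"
    and "(\<Sum>\<pi>\<leftarrow>ps. Delta \<alpha> \<pi>) = (\<Sum>x\<in>S. step_cost \<alpha> x (\<sigma> x))"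
    and "length (filter (\<lambda>\<pi>. length \<pi> = 1) ps) = card {x\<in>S. \<sigma> x = x}"
proof -
  have "finite S" using assms(1) finite_subset by blast
  then obtain ps where ps: "\<forall>\<pi>\<in>set ps. \<pi> \<noteq> [] \<and> (\<forall>x\<in>set \<pi>. \<sigma> x = cycle_of_list \<pi> x)"
    "distinct (concat ps)" "set (concat ps) = S"
    using permutes_cycle_lists[OF assms(2)] by blast
  have dist: "distinct \<pi>" if "\<pi> \<in> set ps" for \<pi>
    using ps(2) that by (simp add: distinct_concat_iff)
  have "cyclic_partition K S ps"
    using ps dist assms(1) by (auto simp: cyclic_partition_def is_cycle_def)
  moreover have "(\<Sum>x\<in>S. step_cost \<alpha> x (\<sigma> x)) = (\<Sum>\<pi>\<leftarrow>ps. \<Sum>x\<in>set \<pi>. step_cost \<alpha> x (\<sigma> x))"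
    using sum_set_concat[OF ps(2)] ps(3) by metis
  moreover have "\<dots> = (\<Sum>\<pi>\<leftarrow>ps. Delta \<alpha> \<pi>)"
    using ps(1) dist by (intro arg_cong[where f = sum_list] map_cong refl)
      (simp add: Delta_eq_sum_step_cost cong: sum.cong)
  moreover have "length (filter (\<lambda>\<pi>. length \<pi> = 1) ps) = card {x\<in>S. \<sigma> x = x}"
    using card_fixpoints_cycle_lists[of ps \<sigma>] ps(1,2) unfolding ps(3) by simp
  ultimately show ?thesis using that by simp
qed

theorem lemma5:
  fixes K :: nat and \<alpha> :: "nat \<Rightarrow> nat \<Rightarrow> real" and S :: "nat set"
  assumes "SLS K \<alpha>" and "S \<subseteq> {1..K}"
  shows "\<exists>ps. p_optimal K \<alpha> S ps \<and> length (filter (\<lambda>\<pi>. length \<pi> = 1) ps) \<le> 1"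
proof -
  have "finite S" using assms(2) finite_subset by blast
  obtain \<sigma> where \<sigma>_opt: "min_cost_permutation (step_cost \<alpha>) S \<sigma>"
    and few_fixpoints: "card {x\<in>S. \<sigma> x = x} \<le> 1"
    using optimal_permutation_with_few_fixpoints[where C = "step_cost \<alpha>",
        OF \<open>finite S\<close> SLS_step_cost_swap[OF assms]] .
  have \<sigma>: "\<sigma> permutes S" using \<sigma>_opt by (simp add: min_cost_permutation_def)
  obtain d where d: "d \<in> D_PTIN K \<alpha> S" "(\<Sum>k\<in>S. d k) = (\<Sum>x\<in>S. step_cost \<alpha> x (\<sigma> x))"
    using D_PTIN_attains_min_cost_permutation[OF assms \<sigma>_opt] .
  obtain ps where partition: "cyclic_partition K S ps"
    and Delta_value: "(\<Sum>\<pi>\<leftarrow>ps. Delta \<alpha> \<pi>) = (\<Sum>x\<in>S. step_cost \<alpha> x (\<sigma> x))"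
    and trivial_cycles: "length (filter (\<lambda>\<pi>. length \<pi> = 1) ps) = card {x\<in>S. \<sigma> x = x}"
    using cyclic_partition_of_permutation[OF assms(2) \<sigma>] .
  have "p_optimal K \<alpha> S ps"
    using p_optimalI[OF partition d(1)] d(2) Delta_value by simp
  then show ?thesis
    using trivial_cycles few_fixpoints by auto
qed

end
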